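(* (i) For all $\tau\in\mathbb{H}$ with $e^{-2\pi\operatorname{Im}\tau}\le\frac13$, $$|\Delta(\tau)|\ge e^{-2\pi\operatorname{Im}\tau}\Big(1-e^{-2\pi\operatorname{Im}\tau}-e^{-4\pi\operatorname{Im}\tau}-\frac{2e^{-4\pi\operatorname{Im}\tau}}{1-e^{-2\pi\operatorname{Im}\tau}}\Big)^{24}.$$ (ii) For all $\tau\in\mathbb{H}$, $$|\Delta(\tau)|\le e^{-2\pi\operatorname{Im}\tau}\Big(1+2e^{-2\pi\operatorname{Im}\tau}+\frac{2e^{-8\pi\operatorname{Im}\tau}}{1-e^{-4\pi\operatorname{Im}\tau}}\Big)^{24}.$$
   Context: $\mathbb{H}$ is the upper half plane, $q=e^{2\pi i\tau}$, and $\Delta(\tau)=q\prod_{n\ge1}(1-q^n)^{24}$. *)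

theory Defs
  imports "HOL-Analysis.Analysis"
begin

definition nome :: "complex \<Rightarrow> complex" where
  "nome \<tau> = exp (2 * complex_of_real pi * \<i> * \<tau>)"

definition modular_Delta :: "complex \<Rightarrow> complex" where
  "modular_Delta \<tau> = nome \<tau> * (\<Prod>n. (1 - nome \<tau> ^ Suc n) ^ 24)"

end

theory Submission
  imports Defs
begin

(* With r = |q| = exp (-2 pi Im tau) we have |Delta| = r |P|^24 for P = prod_{n>=1} (1 - q^n).
   Lower bound: |P| >= prod (1 - r^n) >= 1 - sum_n r^n = 1 - r/(1-r) by the Weierstrass product
   inequality, and for r <= 1/3 this dominates the stated bound.
   Upper bound: the finite sums
     S(n,m) = sum_{j<=n} prod_{j<i<=n} (1 - q^i) * q^(m j) * (-1)^j q^(j(j+1)/2)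
   obey first-order q-difference equations in n and in m, which combine to
     S(n+1,n+1) = S(n,n) + q^((n+1)^2) (w_{n+1} - w_n),   w_j = (-1)^j q^(j(j+1)/2),
   so |S(n,n)| <= 1 + 2 sum_{k>=1} r^(k^2) <= 1 + 2r + 2r^4/(1-r^2). The j = 0 term of S(n,n) is
   prod_{i<=n} (1 - q^i) and the others are O(n r^n), so the bound passes to P. *)

definition qprod_tail :: "'a::comm_ring_1 \<Rightarrow> nat \<Rightarrow> nat \<Rightarrow> 'a" where
  "qprod_tail q n j = (\<Prod>i\<in>{j<..n}. 1 - q ^ i)"

(* signed_tri_power q j = (-1)^j q^(j(j+1)/2) *)
fun signed_tri_power :: "'a::comm_ring_1 \<Rightarrow> nat \<Rightarrow> 'a" where
  "signed_tri_power q 0 = 1"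
| "signed_tri_power q (Suc j) = - (q ^ Suc j) * signed_tri_power q j"

declare signed_tri_power.simps(2) [simp del]

definition euler_sum :: "'a::comm_ring_1 \<Rightarrow> nat \<Rightarrow> nat \<Rightarrow> 'a" where
  "euler_sum q n m = (\<Sum>j\<le>n. qprod_tail q n j * q ^ (m * j) * signed_tri_power q j)"

lemma qprod_tail_Suc:
  assumes "j \<le> n"
  shows "qprod_tail q (Suc n) j = (1 - q ^ Suc n) * qprod_tail q n j"
proof -
  have "{j<..Suc n} = insert (Suc n) {j<..n}" using assms by auto
  then show ?thesis unfolding qprod_tail_def by simp
qed

lemma qprod_tail_self [simp]: "qprod_tail q n n = 1"
  unfolding qprod_tail_def by simp

lemma qprod_tail_Suc_lower:
  assumes "i < n"
  shows "qprod_tail q n i = (1 - q ^ Suc i) * qprod_tail q n (Suc i)"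
proof -
  have "{i<..n} = insert (Suc i) {Suc i<..n}" using assms by auto
  then show ?thesis unfolding qprod_tail_def by simp
qed

lemma qprod_tail_0: "qprod_tail q (Suc n) 0 = (\<Prod>i\<le>n. 1 - q ^ Suc i)"
proof -
  have "{0<..Suc n} = {Suc 0..Suc n}" by auto
  then show ?thesis
    unfolding qprod_tail_def by (simp only: prod.shift_bounds_cl_Suc_ivl atLeast0AtMost)
qed

lemma euler_sum_Suc_left:
  "euler_sum q (Suc n) m =
     (1 - q ^ Suc n) * euler_sum q n m + q ^ (m * Suc n) * signed_tri_power q (Suc n)"
  unfolding euler_sum_def
  by (simp add: qprod_tail_Suc sum_distrib_left algebra_simps)

lemma euler_sum_Suc_right:
  "(1 - q ^ Suc m) * euler_sum q n (Suc m) =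
     euler_sum q n m - q ^ (Suc m * Suc n) * signed_tri_power q n"
proof -
  let ?w = "signed_tri_power q"
  define c where "c k i = qprod_tail q n i * q ^ (k * i) * ?w i" for k i
  have shift: "euler_sum q n k = c k 0 + (\<Sum>i<n. c k (Suc i))" for k
    unfolding euler_sum_def c_def by (subst sum.atMost_shift) simp
  have step: "c (Suc m) (Suc i) - c m (Suc i) = q ^ Suc m * c (Suc m) i" if "i < n" for i
  proof -
    have lower: "qprod_tail q n i = (1 - q ^ Suc i) * qprod_tail q n (Suc i)"
      using that by (rule qprod_tail_Suc_lower)
    show ?thesis
      unfolding c_def lower by (simp add: signed_tri_power.simps power_add algebra_simps)
  qed
  have "euler_sum q n (Suc m) - euler_sum q n m = (\<Sum>i<n. c (Suc m) (Suc i) - c m (Suc i))"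
    unfolding shift by (simp add: sum_subtractf c_def)
  also have "\<dots> = q ^ Suc m * (\<Sum>i<n. c (Suc m) i)"
    by (simp add: step sum_distrib_left)
  also have "(\<Sum>i<n. c (Suc m) i) = euler_sum q n (Suc m) - q ^ (Suc m * n) * ?w n"
    unfolding euler_sum_def c_def
    by (simp add: sum.lessThan_Suc[of _ n, unfolded lessThan_Suc_atMost])
  finally show ?thesis by (simp add: power_add algebra_simps)
qed

lemma euler_sum_diag_Suc:
  "euler_sum q (Suc n) (Suc n) =
     euler_sum q n n + q ^ (Suc n)\<^sup>2 * (signed_tri_power q (Suc n) - signed_tri_power q n)"
  using euler_sum_Suc_right[of q n n] unfolding euler_sum_Suc_left
  by (simp add: power2_eq_square algebra_simps)

lemma euler_sum_diag_eq:
  "euler_sum q n n =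
     1 + (\<Sum>k<n. q ^ (Suc k)\<^sup>2 * (signed_tri_power q (Suc k) - signed_tri_power q k))"
proof (induction n)
  case 0
  then show ?case by (simp add: euler_sum_def)
next
  case (Suc n)
  then show ?case by (simp add: euler_sum_diag_Suc)
qed

lemma norm_signed_tri_power_le:
  fixes q :: "'a::{real_normed_div_algebra,comm_ring_1}"
  assumes "norm q \<le> 1"
  shows "norm (signed_tri_power q j) \<le> 1"
proof (induction j)
  case (Suc j)
  have "norm (signed_tri_power q (Suc j)) = norm q ^ Suc j * norm (signed_tri_power q j)"
    by (simp add: signed_tri_power.simps norm_mult norm_power)
  also have "\<dots> \<le> 1"
    using Suc assms by (simp add: mult_le_one power_le_one)
  finally show ?case .
qed simp

lemma norm_euler_sum_diag_le:
  fixes q :: "'a::{real_normed_div_algebra,comm_ring_1}"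
  assumes "norm q \<le> 1"
  shows "norm (euler_sum q n n) \<le> 1 + 2 * (\<Sum>k<n. norm q ^ (Suc k)\<^sup>2)"
proof -
  let ?S = "\<Sum>k<n. q ^ (Suc k)\<^sup>2 * (signed_tri_power q (Suc k) - signed_tri_power q k)"
  have "norm (q ^ (Suc k)\<^sup>2 * (signed_tri_power q (Suc k) - signed_tri_power q k))
      \<le> 2 * norm q ^ (Suc k)\<^sup>2" for k
  proof -
    have "norm (signed_tri_power q (Suc k) - signed_tri_power q k) \<le> 2"
      using norm_triangle_ineq4[of "signed_tri_power q (Suc k)" "signed_tri_power q k"]
        norm_signed_tri_power_le[OF assms, of k] norm_signed_tri_power_le[OF assms, of "Suc k"]
      by linarith
    from mult_left_mono[OF this, of "norm q ^ (Suc k)\<^sup>2"] show ?thesis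
      by (simp add: norm_mult norm_power mult.commute)
  qed
  then have "norm ?S \<le> 2 * (\<Sum>k<n. norm q ^ (Suc k)\<^sup>2)"
    by (simp add: sum_distrib_left norm_sum sum_mono order_trans[OF norm_sum])
  then show ?thesis
    unfolding euler_sum_diag_eq using norm_triangle_ineq[of 1 ?S] by simp
qed

lemma sum_power_squares_le:
  fixes r :: real
  assumes "0 \<le> r" "r < 1"
  shows "(\<Sum>k<n. r ^ (Suc k)\<^sup>2) \<le> r + r ^ 4 / (1 - r\<^sup>2)"
proof (cases n)
  case 0
  then show ?thesis using assms by (simp add: power_le_one)
next
  case (Suc m)
  have r2: "r\<^sup>2 < 1" using assms by (simp add: power_less_one_iff)
  have "(\<Sum>k<n. r ^ (Suc k)\<^sup>2) = r + (\<Sum>k<m. r ^ (Suc (Suc k))\<^sup>2)"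
    unfolding Suc by (subst sum.lessThan_Suc_shift) simp
  also have "(\<Sum>k<m. r ^ (Suc (Suc k))\<^sup>2) \<le> (\<Sum>k<m. r ^ 4 * (r\<^sup>2) ^ k)"
  proof (rule sum_mono)
    fix k
    have "r ^ (Suc (Suc k))\<^sup>2 \<le> r ^ (4 + 2 * k)"
      using assms by (intro power_decreasing) (auto simp: power2_eq_square)
    then show "r ^ (Suc (Suc k))\<^sup>2 \<le> r ^ 4 * (r\<^sup>2) ^ k"
      by (simp add: power_add power_mult)
  qed
  also have "\<dots> \<le> r ^ 4 * (\<Sum>k. (r\<^sup>2) ^ k)"
    unfolding sum_distrib_left[symmetric] using assms r2
    by (intro mult_left_mono sum_le_suminf summable_geometric) auto
  also have "(\<Sum>k. (r\<^sup>2) ^ k) = 1 / (1 - r\<^sup>2)"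
    using r2 assms by (simp add: suminf_geometric)
  finally show ?thesis by simp
qed

lemma norm_qprod_tail_le:
  fixes q :: "'a::{real_normed_div_algebra,comm_ring_1}"
  assumes "norm q < 1"
  shows "norm (qprod_tail q n j) \<le> exp (1 / (1 - norm q))"
proof -
  have "norm (qprod_tail q n j) \<le> (\<Prod>i\<in>{j<..n}. 1 + norm q ^ i)"
    unfolding qprod_tail_def prod_norm[symmetric]
    by (intro prod_mono) (simp add: norm_power order_trans[OF norm_triangle_ineq4])
  also have "\<dots> \<le> exp (\<Sum>i\<in>{j<..n}. norm q ^ i)"
    by (rule prod_le_exp_sum) simp
  also have "(\<Sum>i\<in>{j<..n}. norm q ^ i) \<le> (\<Sum>i. norm q ^ i)"
    using assms by (intro sum_le_suminf summable_geometric) auto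
  also have "(\<Sum>i. norm q ^ i) = 1 / (1 - norm q)"
    using assms by (simp add: suminf_geometric)
  finally show ?thesis by simp
qed

lemma norm_euler_sum_diag_minus_prod_le:
  fixes q :: "'a::{real_normed_div_algebra,comm_ring_1}"
  assumes "norm q < 1"
  shows "norm (euler_sum q n n - qprod_tail q n 0)
           \<le> real n * exp (1 / (1 - norm q)) * norm q ^ n"
proof -
  let ?t = "\<lambda>i. qprod_tail q n (Suc i) * q ^ (n * Suc i) * signed_tri_power q (Suc i)"
  have "norm (?t i) \<le> exp (1 / (1 - norm q)) * norm q ^ n" for i
  proof -
    have "norm (?t i) =
        norm (qprod_tail q n (Suc i)) * norm q ^ (n * Suc i) * norm (signed_tri_power q (Suc i))"
      by (simp add: norm_mult norm_power)
    also have "\<dots> \<le> exp (1 / (1 - norm q)) * norm q ^ n * 1"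
      using assms norm_qprod_tail_le[OF assms] norm_signed_tri_power_le[of q "Suc i"]
      by (intro mult_mono power_decreasing) auto
    finally show ?thesis by simp
  qed
  then have "(\<Sum>i<n. norm (?t i)) \<le> real n * (exp (1 / (1 - norm q)) * norm q ^ n)"
    using sum_bounded_above[of "{..<n}" "\<lambda>i. norm (?t i)"] by simp
  moreover have "euler_sum q n n - qprod_tail q n 0 = (\<Sum>i<n. ?t i)"
    unfolding euler_sum_def by (subst sum.atMost_shift) simp
  ultimately show ?thesis
    using norm_sum[of ?t "{..<n}"] by (simp add: mult.assoc)
qed

lemma convergent_prod_one_minus_power:
  fixes q :: "'a::{real_normed_field,banach}"
  assumes "norm q < 1"
  shows "convergent_prod (\<lambda>i. 1 - q ^ Suc i)"
proof -
  have "summable (\<lambda>i. norm ((1 - q ^ Suc i) - 1))"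
    using assms by (simp add: norm_mult norm_power summable_mult summable_geometric)
  then show ?thesis
    by (intro abs_convergent_prod_imp_convergent_prod summable_imp_abs_convergent_prod)
qed

lemma norm_partial_prod_one_minus_power_LIMSEQ:
  fixes q :: "'a::{real_normed_field,banach}"
  assumes "norm q < 1"
  shows "(\<lambda>n. norm (\<Prod>i\<le>n. 1 - q ^ Suc i)) \<longlonglongrightarrow> norm (\<Prod>i. 1 - q ^ Suc i)"
  by (intro tendsto_norm convergent_prod_LIMSEQ convergent_prod_one_minus_power assms)

lemma norm_prodinf_one_minus_power_le:
  fixes q :: "'a::{real_normed_field,banach}"
  assumes "norm q < 1"
  shows "norm (\<Prod>i. 1 - q ^ Suc i) \<le> 1 + 2 * norm q + 2 * norm q ^ 4 / (1 - (norm q)\<^sup>2)"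
proof -
  let ?r = "norm q" and ?C = "exp (1 / (1 - norm q))"
  let ?U = "1 + 2 * ?r + 2 * ?r ^ 4 / (1 - ?r\<^sup>2)"
  have partial_le: "norm (\<Prod>i\<le>n. 1 - q ^ Suc i) \<le> ?U + ?C * (real (Suc n) * ?r ^ Suc n)" for n
  proof -
    have "norm (\<Prod>i\<le>n. 1 - q ^ Suc i)
        \<le> norm (euler_sum q (Suc n) (Suc n))
          + norm (euler_sum q (Suc n) (Suc n) - qprod_tail q (Suc n) 0)"
      unfolding qprod_tail_0[symmetric] by (metis norm_minus_commute norm_triangle_sub)
    also have "\<dots> \<le> ?U + real (Suc n) * ?C * ?r ^ Suc n"
      using norm_euler_sum_diag_le[of q "Suc n"] sum_power_squares_le[of ?r "Suc n"]
        norm_euler_sum_diag_minus_prod_le[OF assms, of "Suc n"] assms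
      by simp
    finally show ?thesis by (simp add: algebra_simps)
  qed
  have "(\<lambda>n. ?U + ?C * (real (Suc n) * ?r ^ Suc n)) \<longlonglongrightarrow> ?U + ?C * 0"
    using powser_times_n_limit_0[of ?r] assms by (intro tendsto_intros LIMSEQ_Suc) simp
  then show ?thesis
    using partial_le norm_partial_prod_one_minus_power_LIMSEQ[OF assms] by (intro LIMSEQ_le) auto
qed

lemma norm_prodinf_one_minus_power_ge:
  fixes q :: "'a::{real_normed_field,banach}"
  assumes "norm q < 1"
  shows "1 - norm q / (1 - norm q) \<le> norm (\<Prod>i. 1 - q ^ Suc i)"
proof -
  let ?r = "norm q"
  have "1 - ?r / (1 - ?r) \<le> norm (\<Prod>i\<le>n. 1 - q ^ Suc i)" for n
  proof -
    have "(\<Sum>i\<le>n. ?r ^ Suc i) \<le> (\<Sum>i. ?r ^ Suc i)"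
      using assms by (intro sum_le_suminf summable_mult summable_geometric) auto
    also have "\<dots> = ?r / (1 - ?r)"
      using assms by (simp add: suminf_mult suminf_geometric summable_geometric divide_simps)
    finally have "1 - ?r / (1 - ?r) \<le> 1 - (\<Sum>i\<le>n. ?r ^ Suc i)" by simp
    also have "\<dots> \<le> (\<Prod>i\<le>n. 1 - ?r ^ Suc i)"
      using assms by (intro Weierstrass_prod_ineq) (auto intro!: power_le_one simp del: power_Suc)
    also have "\<dots> \<le> (\<Prod>i\<le>n. norm (1 - q ^ Suc i))"
    proof (rule prod_mono)
      fix i
      have "?r ^ Suc i \<le> 1"
        using assms by (intro power_le_one) auto
      moreover have "1 - ?r ^ Suc i \<le> norm (1 - q ^ Suc i)"
        using norm_triangle_ineq2[of 1 "q ^ Suc i"] by (simp add: norm_mult norm_power)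
      ultimately show "0 \<le> 1 - ?r ^ Suc i \<and> 1 - ?r ^ Suc i \<le> norm (1 - q ^ Suc i)"
        by simp
    qed
    finally show ?thesis by (simp add: prod_norm)
  qed
  then show ?thesis
    using norm_partial_prod_one_minus_power_LIMSEQ[OF assms] by (intro LIMSEQ_le_const) auto
qed

lemma norm_nome: "norm (nome \<tau>) = exp (-2 * pi * Im \<tau>)"
  unfolding nome_def by (simp add: norm_exp_eq_Re)

lemma norm_modular_Delta:
  assumes "norm (nome \<tau>) < 1"
  shows "norm (modular_Delta \<tau>) = norm (nome \<tau>) * norm (\<Prod>i. 1 - nome \<tau> ^ Suc i) ^ 24"
  unfolding modular_Delta_def
  by (simp only: prodinf_power[OF convergent_prod_one_minus_power[OF assms]] norm_mult norm_power)

lemma lower_base_le_one_minus_geometric: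
  fixes r :: real
  assumes "0 \<le> r" "r < 1"
  shows "1 - r - r\<^sup>2 - 2 * r\<^sup>2 / (1 - r) \<le> 1 - r / (1 - r)"
proof -
  have "r / (1 - r) = r + r\<^sup>2 / (1 - r)"
    using assms by (simp add: field_simps power2_eq_square)
  moreover have "0 \<le> r\<^sup>2 / (1 - r)"
    using assms by simp
  ultimately show ?thesis
    by (simp add: field_simps)
qed

lemma lower_base_nonneg:
  fixes r :: real
  assumes "0 \<le> r" "r \<le> 1/3"
  shows "0 \<le> 1 - r - r\<^sup>2 - 2 * r\<^sup>2 / (1 - r)"
proof -
  have "r\<^sup>2 \<le> r / 3"
    using assms mult_left_mono[of r "1/3" r] by (simp add: power2_eq_square)
  moreover have "(1 - r - r\<^sup>2) * (1 - r) = 1 - 2 * r + r ^ 3"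
    by (simp add: algebra_simps power2_eq_square power3_eq_cube)
  moreover have "0 \<le> r ^ 3"
    using assms by simp
  ultimately have "2 * r\<^sup>2 \<le> (1 - r - r\<^sup>2) * (1 - r)"
    using assms by linarith
  then show ?thesis
    using assms by (simp add: divide_le_eq)
qed

lemma norm_modular_Delta_ge:
  assumes "norm (nome \<tau>) = r" "r \<le> 1/3"
  shows "r * (1 - r - r\<^sup>2 - 2 * r\<^sup>2 / (1 - r)) ^ 24 \<le> norm (modular_Delta \<tau>)"
proof -
  have q: "norm (nome \<tau>) < 1" using assms by simp
  have "1 - r - r\<^sup>2 - 2 * r\<^sup>2 / (1 - r) \<le> norm (\<Prod>i. 1 - nome \<tau> ^ Suc i)"
    using lower_base_le_one_minus_geometric[of r] norm_prodinf_one_minus_power_ge[OF q] assms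
    by auto
  then have "(1 - r - r\<^sup>2 - 2 * r\<^sup>2 / (1 - r)) ^ 24
      \<le> norm (\<Prod>i. 1 - nome \<tau> ^ Suc i) ^ 24"
    using lower_base_nonneg[of r] assms by (intro power_mono) auto
  then show ?thesis
    unfolding norm_modular_Delta[OF q] assms(1) using assms by (intro mult_left_mono) auto
qed

lemma norm_modular_Delta_le:
  assumes "norm (nome \<tau>) = r" "r < 1"
  shows "norm (modular_Delta \<tau>) \<le> r * (1 + 2 * r + 2 * r ^ 4 / (1 - r\<^sup>2)) ^ 24"
proof -
  have q: "norm (nome \<tau>) < 1" using assms by simp
  have "norm (\<Prod>i. 1 - nome \<tau> ^ Suc i) ^ 24 \<le> (1 + 2 * r + 2 * r ^ 4 / (1 - r\<^sup>2)) ^ 24"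
    using norm_prodinf_one_minus_power_le[OF q] assms by (intro power_mono) auto
  then show ?thesis
    unfolding norm_modular_Delta[OF q] assms(1) using assms by (intro mult_left_mono) auto
qed

lemma exp_Im_eq_norm_nome_power:
  "exp (-2 * pi * Im \<tau>) = norm (nome \<tau>)"
  "exp (-4 * pi * Im \<tau>) = (norm (nome \<tau>))\<^sup>2"
  "exp (-8 * pi * Im \<tau>) = norm (nome \<tau>) ^ 4"
  by (simp_all add: norm_nome exp_of_nat_mult[symmetric])

lemma norm_nome_less_1: "Im \<tau> > 0 \<Longrightarrow> norm (nome \<tau>) < 1"
  by (simp add: norm_nome)

theorem proposition3p4:
  shows "(\<forall>\<tau>::complex. Im \<tau> > 0 \<and> exp (-2 * pi * Im \<tau>) \<le> 1/3 \<longrightarrow>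
            norm (modular_Delta \<tau>) \<ge>
              exp (-2 * pi * Im \<tau>) *
              (1 - exp (-2 * pi * Im \<tau>) - exp (-4 * pi * Im \<tau>)
                 - 2 * exp (-4 * pi * Im \<tau>) / (1 - exp (-2 * pi * Im \<tau>))) ^ 24)
       \<and> (\<forall>\<tau>::complex. Im \<tau> > 0 \<longrightarrow>
            norm (modular_Delta \<tau>) \<le>
              exp (-2 * pi * Im \<tau>) *
              (1 + 2 * exp (-2 * pi * Im \<tau>)
                 + 2 * exp (-8 * pi * Im \<tau>) / (1 - exp (-4 * pi * Im \<tau>))) ^ 24)"
  unfolding exp_Im_eq_norm_nome_power
  using norm_modular_Delta_ge[OF refl] norm_modular_Delta_le[OF refl norm_nome_less_1] by auto

end
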